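(* Let $\lambda>0$ be fixed, and assume there are constants $C_d>C_u>0$ and events $\mathcal{B}_N$ on the predictor sample, with $\mathbb{P}(\mathcal{B}_N)\to1$, such that on $\mathcal{B}_N$, with $K_0=\lfloor\ln(N)/(2C_d+1)\rfloor$, the eigenvalues $\widehat\mu_1\ge\dots\ge\widehat\mu_N$ of the Gram matrix satisfy $$\sum_{k=K_0}^N\widehat\mu_k\le\sum_{k=K_0}^Ne^{-C_uk}\quad\text{and}\quad\widehat\mu_{K_0}\ge e^{-C_dK_0}.$$ Then for $m=m(N)=N^{\frac14\frac{C_u+C_d+1/2}{C_d+1}}$, on $\mathcal{B}_N$, $$\frac1{\sqrt N}\sum_{\ell=1}^N\Big(1-\Big(1-\frac{\widehat\mu_\ell}{\widehat\mu_\ell+\lambda}\Big)^m\Big)^2\to0\qquad(N\to\infty).$$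
   Context: Gram matrix: $G_{ij}=K(\widetilde{\mathbf{x}}_i,\widetilde{\mathbf{x}}_j)/N$ for the additive kernel $K(\mathbf{x},\mathbf{x}')=\sum_{j=1}^d\exp(-|x_j-x_j'|^2/(2\varsigma_j))$ evaluated at the sample $\widetilde{\mathbf{x}}_1,\dots,\widetilde{\mathbf{x}}_N\in\mathbb{R}^d$. *)

theory Defs
  imports Complex_Main "Jordan_Normal_Form.Char_Poly"
begin

definition add_kernel :: "nat \<Rightarrow> (nat \<Rightarrow> real) \<Rightarrow> (nat \<Rightarrow> real) \<Rightarrow> (nat \<Rightarrow> real) \<Rightarrow> real" where
  "add_kernel d vs x x' = (\<Sum>j=1..d. exp (- ((\<bar>x j - x' j\<bar>) ^ 2) / (2 * vs j)))"

text \<open>Gram matrix G_ij = K(x_i, x_j)/N of the sample x_1..x_N (stored 0-based: x 0 .. x (N-1)).\<close>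
definition gram :: "nat \<Rightarrow> (nat \<Rightarrow> real) \<Rightarrow> nat \<Rightarrow> (nat \<Rightarrow> nat \<Rightarrow> real) \<Rightarrow> real mat" where
  "gram d vs N x = mat N N (\<lambda>(i,j). add_kernel d vs (x i) (x j) / real N)"

end

theory Submission
  imports Defs "HOL-Real_Asymp.Real_Asymp"
begin

(* The Gram matrix of the additive Gaussian kernel is positive semidefinite: each Gaussian factors
   as exp(-x^2/2s) exp(-y^2/2s) exp(xy/s), and exp(xy/s) is a series with nonnegative coefficients
   in the rank-one kernels (xy)^n. Hence all mu_l are nonnegative, and each filter value
   1 - (lam/(mu_l+lam))^m lies in [0,1] and is at most m mu_l/lam. Splitting the sum at K0, the
   first K0 - 1 terms contribute at most ln N, and by the tail hypothesis the remaining ones at most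
   (m/lam)^2 (sum_{k>=K0} mu_k)^2 = O(N^(2a - 2Cu/(2Cd+1))) for m = N^a. Both are o(sqrt N) since
   2a - 2Cu/(2Cd+1) < 1/2. *)

lemma exp_product_kernel_quadratic_form_nonneg:
  fixes w a :: "'i \<Rightarrow> real"
  assumes "finite I"
  shows "0 \<le> (\<Sum>i\<in>I. \<Sum>j\<in>I. w i * w j * exp (a i * a j))"
proof -
  have "(\<lambda>n. \<Sum>i\<in>I. \<Sum>j\<in>I. w i * w j * ((a i * a j) ^ n / fact n)) sums
      (\<Sum>i\<in>I. \<Sum>j\<in>I. w i * w j * exp (a i * a j))"
  proof (intro sums_sum sums_mult)
    fix i j
    show "(\<lambda>n. (a i * a j) ^ n / fact n) sums exp (a i * a j)"
      using exp_converges[of "a i * a j"] by (simp add: divide_inverse mult.commute)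
  qed
  moreover have "(\<Sum>i\<in>I. \<Sum>j\<in>I. w i * w j * ((a i * a j) ^ n / fact n))
      = (\<Sum>i\<in>I. w i * a i ^ n)\<^sup>2 / fact n" for n
    by (simp add: power2_eq_square sum_product sum_divide_distrib power_mult_distrib mult_ac)
  ultimately have series: "(\<lambda>n. (\<Sum>i\<in>I. w i * a i ^ n)\<^sup>2 / fact n) sums
      (\<Sum>i\<in>I. \<Sum>j\<in>I. w i * w j * exp (a i * a j))"
    by simp
  show ?thesis
    by (rule sums_le[OF _ sums_zero series]) simp
qed

lemma gaussian_kernel_quadratic_form_nonneg:
  fixes v x :: "'i \<Rightarrow> real"
  assumes "0 < s" "finite I"
  shows "0 \<le> (\<Sum>i\<in>I. \<Sum>j\<in>I. v i * v j * exp (- ((\<bar>x i - x j\<bar>) ^ 2) / (2 * s)))"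
proof -
  define w where "w i = v i * exp (- (x i ^ 2) / (2 * s))" for i
  have "exp (- ((\<bar>x i - x j\<bar>) ^ 2) / (2 * s))
      = exp (- (x i ^ 2) / (2 * s)) * exp (- (x j ^ 2) / (2 * s)) * exp (x i / sqrt s * (x j / sqrt s))"
    for i j
  proof -
    have "- ((\<bar>x i - x j\<bar>) ^ 2) / (2 * s)
        = - (x i ^ 2) / (2 * s) + - (x j ^ 2) / (2 * s) + x i / sqrt s * (x j / sqrt s)"
      using assms(1) by (simp add: field_simps power2_eq_square)
    then show ?thesis
      by (simp only: exp_add)
  qed
  then have "(\<Sum>i\<in>I. \<Sum>j\<in>I. v i * v j * exp (- ((\<bar>x i - x j\<bar>) ^ 2) / (2 * s)))
      = (\<Sum>i\<in>I. \<Sum>j\<in>I. w i * w j * exp (x i / sqrt s * (x j / sqrt s)))"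
    unfolding w_def by (simp add: mult_ac)
  then show ?thesis
    using exp_product_kernel_quadratic_form_nonneg[OF assms(2)] by (simp only:)
qed

lemma add_kernel_quadratic_form_nonneg:
  fixes v :: "'i \<Rightarrow> real" and x :: "'i \<Rightarrow> nat \<Rightarrow> real"
  assumes "\<And>j. j \<in> {1..d} \<Longrightarrow> 0 < vs j" "finite I"
  shows "0 \<le> (\<Sum>i\<in>I. \<Sum>j\<in>I. v i * v j * add_kernel d vs (x i) (x j))"
proof -
  have "(\<Sum>i\<in>I. \<Sum>j\<in>I. v i * v j * add_kernel d vs (x i) (x j))
      = (\<Sum>c=1..d. \<Sum>i\<in>I. \<Sum>j\<in>I. v i * v j * exp (- ((\<bar>x i c - x j c\<bar>) ^ 2) / (2 * vs c)))"
    unfolding add_kernel_def sum_distrib_left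
    by (simp only: sum.swap[of _ I "{1..d}"])
  also have "0 \<le> \<dots>"
    using assms by (intro sum_nonneg gaussian_kernel_quadratic_form_nonneg) auto
  finally show ?thesis .
qed

lemma eigenvalue_nonneg_if_quadratic_form_nonneg:
  fixes A :: "real mat"
  assumes A: "A \<in> carrier_mat n n"
    and psd: "\<And>v. v \<in> carrier_vec n \<Longrightarrow> 0 \<le> v \<bullet> (A *\<^sub>v v)"
    and "eigenvalue A c"
  shows "0 \<le> c"
proof -
  obtain v where v: "v \<in> carrier_vec n" "v \<noteq> 0\<^sub>v n" "A *\<^sub>v v = c \<cdot>\<^sub>v v"
    using assms unfolding eigenvalue_def eigenvector_def by auto
  have "v \<bullet> (A *\<^sub>v v) = c * (v \<bullet> v)"
    using v by simp
  moreover have "0 < v \<bullet> v"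
    using conjugate_square_greater_0_vec[OF v(1)] v(2) by simp
  ultimately show ?thesis
    using psd[OF v(1)] by (simp add: zero_le_mult_iff)
qed

lemma gram_quadratic_form:
  assumes "v \<in> carrier_vec N"
  shows "v \<bullet> (gram d vs N x *\<^sub>v v)
    = (\<Sum>i<N. \<Sum>j<N. v $ i * v $ j * add_kernel d vs (x i) (x j)) / real N"
  using assms
  by (simp add: gram_def scalar_prod_def mult_mat_vec_def lessThan_atLeast0 sum_distrib_left
      sum_divide_distrib mult_ac)

lemma gram_eigenvalue_nonneg:
  assumes "\<And>j. j \<in> {1..d} \<Longrightarrow> 0 < vs j" "eigenvalue (gram d vs N x) c"
  shows "0 \<le> c"
proof (rule eigenvalue_nonneg_if_quadratic_form_nonneg)
  show "gram d vs N x \<in> carrier_mat N N"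
    by (simp add: gram_def)
  show "0 \<le> v \<bullet> (gram d vs N x *\<^sub>v v)" if "v \<in> carrier_vec N" for v
    unfolding gram_quadratic_form[OF that]
    using add_kernel_quadratic_form_nonneg[of d vs "{..<N}" "\<lambda>i. v $ i" x] assms(1) by simp
qed (fact assms(2))

lemma gram_char_poly_root_nonneg:
  assumes "\<And>j. j \<in> {1..d} \<Longrightarrow> 0 < vs j"
    and "char_poly (gram d vs N x) = (\<Prod>k=1..N. [:- mu k, 1:])" "k \<in> {1..N}"
  shows "0 \<le> mu k"
proof (rule gram_eigenvalue_nonneg[OF assms(1)])
  have "poly (char_poly (gram d vs N x)) (mu k) = 0"
    unfolding assms(2) poly_prod using assms(3) by (intro prod_zero bexI[of _ k]) auto
  then show "eigenvalue (gram d vs N x) (mu k)"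
    by (simp add: eigenvalue_root_char_poly[of _ N] gram_def)
qed

(* 1 - (lam/(mu+lam))^m is the spectral filter of m-fold iterated Tikhonov regularisation;
   here m is a real exponent. *)
definition iterated_tikhonov_filter :: "real \<Rightarrow> real \<Rightarrow> real \<Rightarrow> real" where
  "iterated_tikhonov_filter lam m mu = 1 - (1 - mu / (mu + lam)) powr m"

lemma iterated_tikhonov_filter_bounds:
  assumes "0 \<le> mu" "0 < lam" "0 \<le> m"
  shows "0 \<le> iterated_tikhonov_filter lam m mu"
    and "iterated_tikhonov_filter lam m mu \<le> 1"
    and "iterated_tikhonov_filter lam m mu \<le> m * mu / lam"
proof -
  define y where "y = 1 - mu / (mu + lam)"
  have y: "0 < y" "y \<le> 1" "y = inverse (1 + mu / lam)"
    unfolding y_def using assms by (auto simp: field_simps)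
  show "0 \<le> iterated_tikhonov_filter lam m mu" "iterated_tikhonov_filter lam m mu \<le> 1"
    unfolding iterated_tikhonov_filter_def y_def[symmetric] using y assms(3) by (auto intro: powr_le1)
  have "m * ln (1 + mu / lam) \<le> m * (mu / lam)"
    using assms by (intro mult_left_mono ln_add_one_self_le_self) auto
  moreover have "m * ln y = - (m * ln (1 + mu / lam))"
    using y assms by (simp add: ln_inverse)
  moreover have "1 + m * ln y \<le> y powr m"
    using exp_ge_add_one_self[of "m * ln y"] y by (simp add: powr_def mult.commute)
  ultimately show "iterated_tikhonov_filter lam m mu \<le> m * mu / lam"
    unfolding iterated_tikhonov_filter_def y_def[symmetric] by simp
qed

lemma sum_squares_le_square_sum:
  fixes f :: "'a \<Rightarrow> 'b :: linordered_semidom"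
  assumes "finite A" "\<And>x. x \<in> A \<Longrightarrow> 0 \<le> f x"
  shows "(\<Sum>x\<in>A. f x ^ 2) \<le> (\<Sum>x\<in>A. f x) ^ 2"
proof -
  have "(\<Sum>x\<in>A. f x ^ 2) \<le> (\<Sum>x\<in>A. f x * (\<Sum>y\<in>A. f y))"
    unfolding power2_eq_square using assms
    by (intro sum_mono mult_left_mono member_le_sum) auto
  also have "\<dots> = (\<Sum>x\<in>A. f x) ^ 2"
    by (simp add: power2_eq_square sum_distrib_right)
  finally show ?thesis .
qed

lemma iterated_tikhonov_filter_sq_sum_le:
  fixes mu :: "nat \<Rightarrow> real"
  assumes mu: "\<And>l. l \<in> {1..N} \<Longrightarrow> 0 \<le> mu l" and "0 < lam" "0 \<le> m"
    and K: "1 \<le> K" "K \<le> N + 1" and tail: "(\<Sum>l=K..N. mu l) \<le> S"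
  shows "(\<Sum>l=1..N. iterated_tikhonov_filter lam m (mu l) ^ 2) \<le> real K - 1 + (m * S / lam) ^ 2"
proof -
  let ?f = "\<lambda>l. iterated_tikhonov_filter lam m (mu l)"
  have bounds: "0 \<le> ?f l" "?f l \<le> 1" "?f l \<le> m * mu l / lam" if "l \<in> {1..N}" for l
    using iterated_tikhonov_filter_bounds[OF mu[OF that] assms(2,3)] by auto
  have split: "{1..N} = {1..<K} \<union> {K..N}"
    using K by auto
  have "(\<Sum>l=1..N. ?f l ^ 2) = (\<Sum>l\<in>{1..<K}. ?f l ^ 2) + (\<Sum>l=K..N. ?f l ^ 2)"
    unfolding split by (rule sum.union_disjoint) auto
  also have "(\<Sum>l\<in>{1..<K}. ?f l ^ 2) \<le> real K - 1"
  proof -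
    have "(\<Sum>l\<in>{1..<K}. ?f l ^ 2) \<le> of_nat (card {1..<K}) * 1"
      using bounds K by (intro sum_bounded_above power_le_one) auto
    then show ?thesis
      using K by simp
  qed
  also have "(\<Sum>l=K..N. ?f l ^ 2) \<le> (\<Sum>l=K..N. (m / lam * mu l) ^ 2)"
    using bounds K by (intro sum_mono power_mono) auto
  also have "\<dots> = (m / lam) ^ 2 * (\<Sum>l=K..N. mu l ^ 2)"
    by (simp only: sum_distrib_left power_mult_distrib)
  also have "\<dots> \<le> (m / lam) ^ 2 * (\<Sum>l=K..N. mu l) ^ 2"
    using mu K by (intro mult_left_mono sum_squares_le_square_sum) auto
  also have "\<dots> \<le> (m / lam) ^ 2 * S ^ 2"
    using mu K tail by (intro mult_left_mono power_mono sum_nonneg) auto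
  finally show ?thesis
    by (simp add: power_mult_distrib power_divide)
qed

lemma sum_exp_neg_mult_le:
  fixes c :: real
  assumes "0 < c"
  shows "(\<Sum>k=K..N. exp (- c * real k)) \<le> exp (- c * real K) / (1 - exp (- c))"
proof -
  have exp_pow: "exp (- c * real k) = exp (- c) ^ k" for k
    by (metis exp_of_nat_mult mult.commute)
  have "(\<Sum>k=K..N. exp (- c) ^ k) \<le> exp (- c) ^ K / (1 - exp (- c))"
    using assms by (auto simp: sum_gp divide_right_mono)
  then show ?thesis
    by (simp only: exp_pow)
qed

lemma sum_exp_from_floor_ln_le:
  fixes c r :: real
  assumes "0 < c" "0 < N"
  shows "(\<Sum>k=nat \<lfloor>ln (real N) / r\<rfloor>..N. exp (- c * real k))
    \<le> exp c / (1 - exp (- c)) * real N powr (- c / r)"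
proof -
  let ?K = "nat \<lfloor>ln (real N) / r\<rfloor>"
  have "exp (- c * real ?K) \<le> exp (- c * (ln (real N) / r - 1))"
    using assms(1) by (simp add: mult_left_mono) linarith
  also have "\<dots> = exp c * real N powr (- c / r)"
    using assms(2) by (simp add: powr_def exp_add[symmetric] algebra_simps)
  finally have "exp (- c * real ?K) / (1 - exp (- c)) \<le> exp c * real N powr (- c / r) / (1 - exp (- c))"
    using assms(1) by (intro divide_right_mono) auto
  then show ?thesis
    using sum_exp_neg_mult_le[OF assms(1), of ?K N] by simp
qed

lemma ln_plus_powr_over_sqrt_tendsto_zero:
  fixes p C :: real
  assumes "p < 1/2"
  shows "(\<lambda>N::nat. (ln (real N) + C * real N powr p) / sqrt (real N)) \<longlonglongrightarrow> 0"
proof -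
  have "(\<lambda>N::nat. ln (real N) / sqrt (real N)) \<longlonglongrightarrow> 0"
    by real_asymp
  moreover have "(\<lambda>N::nat. real N powr (p - 1/2)) \<longlonglongrightarrow> 0"
    using assms by (intro tendsto_neg_powr filterlim_real_sequentially) auto
  ultimately have "(\<lambda>N::nat. ln (real N) / sqrt (real N) + C * real N powr (p - 1/2)) \<longlonglongrightarrow> 0"
    by (intro tendsto_add_zero tendsto_mult_right_zero)
  moreover have "\<forall>\<^sub>F N in sequentially. ln (real N) / sqrt (real N) + C * real N powr (p - 1/2)
      = (ln (real N) + C * real N powr p) / sqrt (real N)"
    using eventually_gt_at_top[of 0]
    by eventually_elim (simp add: powr_diff powr_half_sqrt add_divide_distrib)
  ultimately show ?thesis
    by (rule Lim_transform_eventually)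
qed

lemma tail_rate_exponent_lt_half:
  fixes Cu Cd :: real
  assumes "0 < Cu" "0 \<le> Cd"
  shows "2 * ((1/4) * (Cu + Cd + 1/2) / (Cd + 1)) - 2 * Cu / (2 * Cd + 1) < 1/2"
proof -
  have "2 * ((1/4) * (Cu + Cd + 1/2) / (Cd + 1)) - 1/2 = (Cu - 1/2) / (2 * Cd + 2)"
    using assms by (simp add: field_simps)
  also have "\<dots> < Cu / (2 * Cd + 2)"
    using assms by (intro divide_strict_right_mono) auto
  also have "\<dots> \<le> 2 * Cu / (2 * Cd + 1)"
    using assms by (intro frac_le) auto
  finally show ?thesis
    by linarith
qed

lemma gram_iterated_tikhonov_filter_sq_sum_le:
  fixes mu :: "nat \<Rightarrow> real" and a c :: real
  assumes vs: "\<And>j. j \<in> {1..d} \<Longrightarrow> 0 < vs j" and lam: "0 < lam"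
    and Cu: "0 < Cu" and c: "1 \<le> c"
    and char: "char_poly (gram d vs N x) = (\<Prod>k=1..N. [:- mu k, 1:])"
    and large: "c \<le> ln (real N)"
    and tail: "(\<Sum>k=nat \<lfloor>ln (real N) / c\<rfloor>..N. mu k)
      \<le> (\<Sum>k=nat \<lfloor>ln (real N) / c\<rfloor>..N. exp (- Cu * real k))"
  shows "(\<Sum>l=1..N. iterated_tikhonov_filter lam (real N powr a) (mu l) ^ 2)
    \<le> ln (real N) + (exp Cu / (1 - exp (- Cu)) / lam) ^ 2 * real N powr (2 * a - 2 * Cu / c)"
proof -
  define B where "B = exp Cu / (1 - exp (- Cu))"
  define L where "L = ln (real N) / c"
  define K where "K = nat \<lfloor>L\<rfloor>"
  have N: "0 < N"
    using large c by (cases N) auto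
  have "1 \<le> L" "L \<le> ln (real N)"
    using large c unfolding L_def by (simp_all add: divide_le_eq mult_le_cancel_left1)
  then have K: "1 \<le> K" "real K \<le> ln (real N)"
    unfolding K_def by linarith+
  moreover have "ln (real N) \<le> real N - 1"
    using N by (intro ln_le_minus_one) auto
  ultimately have "K \<le> N + 1"
    by linarith
  have "(\<Sum>k=K..N. mu k) \<le> B * real N powr (- Cu / c)"
    using tail sum_exp_from_floor_ln_le[OF Cu N, of c] unfolding K_def L_def B_def by linarith
  then have "(\<Sum>l=1..N. iterated_tikhonov_filter lam (real N powr a) (mu l) ^ 2)
      \<le> real K - 1 + (real N powr a * (B * real N powr (- Cu / c)) / lam) ^ 2"
    using gram_char_poly_root_nonneg[OF vs char] lam K \<open>K \<le> N + 1\<close>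
    by (intro iterated_tikhonov_filter_sq_sum_le) auto
  also have "(real N powr a * real N powr (- Cu / c)) ^ 2 = real N powr (2 * a - 2 * Cu / c)"
    unfolding power2_eq_square powr_add[symmetric] by (simp add: algebra_simps)
  then have "(real N powr a * (B * real N powr (- Cu / c)) / lam) ^ 2
      = (B / lam) ^ 2 * real N powr (2 * a - 2 * Cu / c)"
    by (simp add: power_mult_distrib power_divide mult_ac)
  finally show ?thesis
    using K unfolding B_def by linarith
qed

theorem lemma7:
  fixes d :: nat and vs :: "nat \<Rightarrow> real" and lam Cu Cd :: real
    and X :: "nat \<Rightarrow> nat \<Rightarrow> (nat \<Rightarrow> real)"
    and mu :: "nat \<Rightarrow> nat \<Rightarrow> real"
  assumes vs_pos: "\<And>j. j \<in> {1..d} \<Longrightarrow> vs j > 0"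
    and lam_pos: "lam > 0"
    and C_pos: "Cu > 0" "Cd > Cu"
    and on_B: "eventually (\<lambda>N.
        (\<forall>k\<in>{1..<N}. mu N k \<ge> mu N (Suc k)) \<and>
        char_poly (gram d vs N (X N)) = (\<Prod>k=1..N. [:- mu N k, 1:]) \<and>
        (let K0 = nat \<lfloor>ln (real N) / (2 * Cd + 1)\<rfloor> in
           (\<Sum>k=K0..N. mu N k) \<le> (\<Sum>k=K0..N. exp (- Cu * real k)) \<and>
           mu N K0 \<ge> exp (- Cd * real K0))) sequentially"
  shows "(\<lambda>N. let m = real N powr ((1/4) * (Cu + Cd + 1/2) / (Cd + 1)) in
            (1 / sqrt (real N)) *
            (\<Sum>l=1..N. (1 - (1 - mu N l / (mu N l + lam)) powr m)^2))
         \<longlonglongrightarrow> 0"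
proof -
  define a where "a = (1/4) * (Cu + Cd + 1/2) / (Cd + 1)"
  define c where "c = 2 * Cd + 1"
  define C where "C = (exp Cu / (1 - exp (- Cu)) / lam) ^ 2"
  define F where "F N = 1 / sqrt (real N)
    * (\<Sum>l=1..N. iterated_tikhonov_filter lam (real N powr a) (mu N l) ^ 2)" for N :: nat
  have "\<forall>\<^sub>F N in sequentially. c \<le> ln (real N)"
    using filterlim_compose[OF ln_at_top filterlim_real_sequentially]
    unfolding filterlim_at_top by blast
  with on_B have upper: "\<forall>\<^sub>F N in sequentially.
      F N \<le> (ln (real N) + C * real N powr (2 * a - 2 * Cu / c)) / sqrt (real N)"
  proof eventually_elim
    case (elim N)
    then have "(\<Sum>l=1..N. iterated_tikhonov_filter lam (real N powr a) (mu N l) ^ 2)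
        \<le> ln (real N) + C * real N powr (2 * a - 2 * Cu / c)"
      unfolding C_def using vs_pos lam_pos C_pos
      by (intro gram_iterated_tikhonov_filter_sq_sum_le[of d vs]) (auto simp: Let_def c_def)
    then show ?case
      unfolding F_def by (simp add: divide_right_mono)
  qed
  have lower: "\<forall>\<^sub>F N in sequentially. 0 \<le> F N"
    unfolding F_def by (intro always_eventually allI mult_nonneg_nonneg sum_nonneg) auto
  have "2 * a - 2 * Cu / c < 1/2"
    unfolding a_def c_def using C_pos by (intro tail_rate_exponent_lt_half) auto
  then have "F \<longlonglongrightarrow> 0"
    by (intro tendsto_sandwich[OF lower upper tendsto_const] ln_plus_powr_over_sqrt_tendsto_zero)
  then show ?thesis
    unfolding F_def iterated_tikhonov_filter_def a_def Let_def .
qed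

end
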